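(* Let $q>0$, $q\neq 1$, and let $x(s)=c_1q^{s}+c_2q^{-s}+c_3$ be a lattice with $q^{\mu}:=c_1/c_2$ (when $c_2=0$ or $c_1=0$, i.e. a $q$-linear lattice, see the convention below). Let $\tilde\sigma$ be a polynomial of degree at most $2$ and $\tilde\tau$ a polynomial of degree at most $1$, and put $$\sigma(s)=\tilde\sigma(x(s))-\tfrac12\tilde\tau(x(s))\,\Delta x\!\left(s-\tfrac12\right),\qquad \tau(s)=\tilde\tau(x(s)).$$ Let $A(s)$ be an arbitrary continuous function not vanishing on the interval $(a,b)$ under consideration. Define the operators $$H(s;q):=-\frac{\sqrt{\sigma(-s-\mu+1)\sigma(s)}}{\nabla x(s)}e^{-\partial_s}-\frac{\sqrt{\sigma(-s-\mu)\sigma(s+1)}}{\Delta x(s)}e^{\partial_s}+\left(\frac{\sigma(-s-\mu)}{\Delta x(s)}+\frac{\sigma(s)}{\nabla x(s)}\right)I,$$ $$\mathfrak H(s;q):=\frac{1}{\nabla x_1(s)}\,A(s)\,H(s;q)\,\frac{1}{A(s)},$$ and, for a number $\alpha$, $$\mathfrak a^{\downarrow}_\alpha(s;q):=\frac{A(s)}{\sqrt{\nabla x_1(s)}}\,e^{-\alpha\partial_s}\left(e^{\partial_s}\sqrt{\frac{\sigma(s)}{\nabla x(s)}}-\sqrt{\frac{\sigma(-s-\mu)}{\Delta x(s)}}\right)\frac{1}{A(s)},$$ $$\mathfrak a^{\uparrow}_\alpha(s;q):=\frac{1}{\nabla x_1(s)}\,A(s)\left(\sqrt{\frac{\sigma(s)}{\nabla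 x(s)}}\,e^{-\partial_s}-\sqrt{\frac{\sigma(-s-\mu)}{\Delta x(s)}}\right)e^{\alpha\partial_s}\,\frac{\sqrt{\nabla x_1(s)}}{A(s)}.$$ Then for all $\alpha\in\mathbb C$, $\mathfrak H(s;q)=\mathfrak a^{\uparrow}_\alpha(s;q)\,\mathfrak a^{\downarrow}_\alpha(s;q)$.
   Context: Notation: $\Delta f(s)=f(s+1)-f(s)$, $\nabla f(s)=f(s)-f(s-1)$; $x_1(s):=x(s+\tfrac12)$; $e^{\beta\partial_s}$ is the shift operator $e^{\beta\partial_s}f(s)=f(s+\beta)$; a function written inside an operator product denotes the operator of multiplication by that function, and products of operators are compositions (acting on functions of $s$); $I$ is the identity operator. Convention: if the lattice is $q$-linear ($x(s)=c\,q^{\pm s}+c_3$), then every occurrence of $\sigma(-s-\mu+\beta)$ is to be read as $\sigma(t)+\tau(t)\Delta x(t-\tfrac12)$ evaluated at $t=s-\beta$ (i.e. $\sigma(-s-\mu)$ is replaced by $\sigma(s)+\tau(s)\Delta x(s-1/2)$). Square roots are taken formally (fixed branches). *)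

theory Defs
  imports "HOL-Analysis.Analysis" "HOL-Computational_Algebra.Polynomial"
begin

definition shift :: "complex \<Rightarrow> (complex \<Rightarrow> complex) \<Rightarrow> (complex \<Rightarrow> complex)" where
  "shift \<beta> f = (\<lambda>s. f (s + \<beta>))"

definition mult :: "(complex \<Rightarrow> complex) \<Rightarrow> (complex \<Rightarrow> complex) \<Rightarrow> (complex \<Rightarrow> complex)" where
  "mult g f = (\<lambda>s. g s * f s)"

definition opsub ::
  "((complex \<Rightarrow> complex) \<Rightarrow> (complex \<Rightarrow> complex)) \<Rightarrow> ((complex \<Rightarrow> complex) \<Rightarrow> (complex \<Rightarrow> complex))
     \<Rightarrow> (complex \<Rightarrow> complex) \<Rightarrow> (complex \<Rightarrow> complex)" where
  "opsub F G = (\<lambda>f s. F f s - G f s)"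

definition fdiff :: "(complex \<Rightarrow> complex) \<Rightarrow> complex \<Rightarrow> complex" where
  "fdiff x s = x (s + 1) - x s"

definition bdiff :: "(complex \<Rightarrow> complex) \<Rightarrow> complex \<Rightarrow> complex" where
  "bdiff x s = x s - x (s - 1)"

definition lat :: "real \<Rightarrow> complex \<Rightarrow> complex \<Rightarrow> complex \<Rightarrow> complex \<Rightarrow> complex" where
  "lat q c1 c2 c3 s = c1 * (complex_of_real q) powr s + c2 * (complex_of_real q) powr (- s) + c3"

definition sig :: "complex poly \<Rightarrow> complex poly \<Rightarrow> (complex \<Rightarrow> complex) \<Rightarrow> complex \<Rightarrow> complex" where
  "sig st tt x s = poly st (x s) - 1/2 * poly tt (x s) * fdiff x (s - 1/2)"

definition tau :: "complex poly \<Rightarrow> (complex \<Rightarrow> complex) \<Rightarrow> complex \<Rightarrow> complex" where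
  "tau tt x s = poly tt (x s)"

text \<open>sigbar s represents sigma(-s-mu); hence sigma(-s-mu+beta) = sigbar (s - beta).
  In the q-linear case (c1 = 0 or c2 = 0) it is sigma(s) + tau(s) Delta x(s - 1/2).\<close>
definition sigbar :: "complex \<Rightarrow> complex \<Rightarrow> complex \<Rightarrow> complex poly \<Rightarrow> complex poly
    \<Rightarrow> (complex \<Rightarrow> complex) \<Rightarrow> complex \<Rightarrow> complex" where
  "sigbar c1 c2 mu st tt x s =
     (if c1 \<noteq> 0 \<and> c2 \<noteq> 0 then sig st tt x (- s - mu)
      else sig st tt x s + tau tt x s * fdiff x (s - 1/2))"

definition nx1 :: "(complex \<Rightarrow> complex) \<Rightarrow> complex \<Rightarrow> complex" where
  "nx1 x s = bdiff (\<lambda>t. x (t + 1/2)) s"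

text \<open>H(s;q); rt is the (formal, fixed-branch) square root; sg = sigma, sb = sigbar.\<close>
definition Hop :: "(complex \<Rightarrow> complex) \<Rightarrow> (complex \<Rightarrow> complex) \<Rightarrow> (complex \<Rightarrow> complex)
    \<Rightarrow> (complex \<Rightarrow> complex) \<Rightarrow> (complex \<Rightarrow> complex) \<Rightarrow> (complex \<Rightarrow> complex)" where
  "Hop rt x sg sb f = (\<lambda>s.
      - (rt (sb (s - 1) * sg s) / bdiff x s) * f (s - 1)
      - (rt (sb s * sg (s + 1)) / fdiff x s) * f (s + 1)
      + (sb s / fdiff x s + sg s / bdiff x s) * f s)"

definition frakH :: "(complex \<Rightarrow> complex) \<Rightarrow> (complex \<Rightarrow> complex) \<Rightarrow> (complex \<Rightarrow> complex)
    \<Rightarrow> (complex \<Rightarrow> complex) \<Rightarrow> (complex \<Rightarrow> complex) \<Rightarrow> (complex \<Rightarrow> complex) \<Rightarrow> (complex \<Rightarrow> complex)" where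
  "frakH rt x sg sb A =
     mult (\<lambda>s. 1 / nx1 x s) \<circ> mult A \<circ> Hop rt x sg sb \<circ> mult (\<lambda>s. 1 / A s)"

definition adown :: "(complex \<Rightarrow> complex) \<Rightarrow> (complex \<Rightarrow> complex) \<Rightarrow> (complex \<Rightarrow> complex)
    \<Rightarrow> (complex \<Rightarrow> complex) \<Rightarrow> (complex \<Rightarrow> complex) \<Rightarrow> complex
    \<Rightarrow> (complex \<Rightarrow> complex) \<Rightarrow> (complex \<Rightarrow> complex)" where
  "adown rt x sg sb A \<alpha> =
     mult (\<lambda>s. A s / rt (nx1 x s)) \<circ> shift (- \<alpha>) \<circ>
     opsub (shift 1 \<circ> mult (\<lambda>s. rt (sg s / bdiff x s))) (mult (\<lambda>s. rt (sb s / fdiff x s))) \<circ>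
     mult (\<lambda>s. 1 / A s)"

definition aup :: "(complex \<Rightarrow> complex) \<Rightarrow> (complex \<Rightarrow> complex) \<Rightarrow> (complex \<Rightarrow> complex)
    \<Rightarrow> (complex \<Rightarrow> complex) \<Rightarrow> (complex \<Rightarrow> complex) \<Rightarrow> complex
    \<Rightarrow> (complex \<Rightarrow> complex) \<Rightarrow> (complex \<Rightarrow> complex)" where
  "aup rt x sg sb A \<alpha> =
     mult (\<lambda>s. 1 / nx1 x s) \<circ> mult A \<circ>
     opsub (mult (\<lambda>s. rt (sg s / bdiff x s)) \<circ> shift (- 1)) (mult (\<lambda>s. rt (sb s / fdiff x s))) \<circ>
     shift \<alpha> \<circ> mult (\<lambda>s. rt (nx1 x s) / A s)"

end

theory Submission
  imports Defs
begin

text \<open>The identity is purely algebraic. Up to the gauge factors, the two ladder operators are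
  first-order difference operators \<open>L = e\<^sup>\<partial> R\<^sub>1 - R\<^sub>2\<close> and \<open>R = R\<^sub>1 e\<^sup>-\<^sup>\<partial> - R\<^sub>2\<close> with
  \<open>R\<^sub>1\<^sup>2 = \<sigma>(s)/\<nabla>x(s)\<close> and \<open>R\<^sub>2\<^sup>2 = \<sigma>(-s-\<mu>)/\<Delta>x(s)\<close>. The shifts \<open>e\<^sup>\<plusminus>\<^sup>\<alpha>\<^sup>\<partial>\<close> and the
  multipliers \<open>\<surd>\<nabla>x\<^sub>1/A\<close>, \<open>A/\<surd>\<nabla>x\<^sub>1\<close> between them cancel, and expanding \<open>R L\<close> gives
  the three-term operator \<open>H\<close>, the off-diagonal coefficients matching by the choice of
  square-root branches.\<close>

definition lower_op :: "(complex \<Rightarrow> complex) \<Rightarrow> (complex \<Rightarrow> complex)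
    \<Rightarrow> (complex \<Rightarrow> complex) \<Rightarrow> (complex \<Rightarrow> complex)" where
  "lower_op R1 R2 = opsub (shift 1 \<circ> mult R1) (mult R2)"

definition raise_op :: "(complex \<Rightarrow> complex) \<Rightarrow> (complex \<Rightarrow> complex)
    \<Rightarrow> (complex \<Rightarrow> complex) \<Rightarrow> (complex \<Rightarrow> complex)" where
  "raise_op R1 R2 = opsub (mult R1 \<circ> shift (- 1)) (mult R2)"

lemma raise_op_cong:
  assumes "g (s - 1) = h (s - 1)" and "g s = h s"
  shows "raise_op R1 R2 g s = raise_op R1 R2 h s"
  using assms by (simp add: raise_op_def opsub_def mult_def shift_def)

lemma raise_lower_op_apply:
  "(raise_op R1 R2 \<circ> lower_op R1 R2) g s =
     - (R1 s * R2 (s - 1)) * g (s - 1) - (R2 s * R1 (s + 1)) * g (s + 1)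
     + (R2 s * R2 s + R1 s * R1 s) * g s"
  by (simp add: raise_op_def lower_op_def opsub_def mult_def shift_def algebra_simps)

lemma shift_mult_divide_cancel:
  assumes "a (t + \<alpha>) \<noteq> 0" and "b (t + \<alpha>) \<noteq> 0"
  shows "(shift \<alpha> \<circ> mult (\<lambda>s. b s / a s) \<circ> mult (\<lambda>s. a s / b s) \<circ> shift (- \<alpha>)) g t = g t"
  using assms by (simp add: shift_def mult_def)

lemma Hop_eq_raise_lower:
  fixes rt x sg sb R1 R2 :: "complex \<Rightarrow> complex"
  defines "R1 \<equiv> \<lambda>t. rt (sg t / bdiff x t)" and "R2 \<equiv> \<lambda>t. rt (sb t / fdiff x t)"
  assumes "\<forall>z. rt z * rt z = z"
    and "rt (sg s / bdiff x s) * rt (sb (s - 1) / fdiff x (s - 1))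
           = rt (sb (s - 1) * sg s) / bdiff x s"
    and "rt (sb s / fdiff x s) * rt (sg (s + 1) / bdiff x (s + 1))
           = rt (sb s * sg (s + 1)) / fdiff x s"
  shows "Hop rt x sg sb g s = (raise_op R1 R2 \<circ> lower_op R1 R2) g s"
  using assms unfolding raise_lower_op_apply by (simp add: Hop_def)

lemma aup_comp_adown_apply:
  fixes rt x sg sb R1 R2 :: "complex \<Rightarrow> complex"
  defines "R1 \<equiv> \<lambda>t. rt (sg t / bdiff x t)" and "R2 \<equiv> \<lambda>t. rt (sb t / fdiff x t)"
  assumes "A (s + \<alpha> - 1) \<noteq> 0" and "A (s + \<alpha>) \<noteq> 0"
    and "rt (nx1 x (s + \<alpha> - 1)) \<noteq> 0" and "rt (nx1 x (s + \<alpha>)) \<noteq> 0"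
  shows "(aup rt x sg sb A \<alpha> \<circ> adown rt x sg sb A \<alpha>) f s =
           1 / nx1 x s * (A s * (raise_op R1 R2 \<circ> lower_op R1 R2) (mult (\<lambda>t. 1 / A t) f) s)"
proof -
  let ?w = "\<lambda>t. rt (nx1 x t)"
  let ?g = "lower_op R1 R2 (mult (\<lambda>t. 1 / A t) f)"
  let ?conj = "shift \<alpha> \<circ> mult (\<lambda>t. ?w t / A t) \<circ> mult (\<lambda>t. A t / ?w t) \<circ> shift (- \<alpha>)"
  have "?conj ?g (s - 1) = ?g (s - 1)"
    by (rule shift_mult_divide_cancel) (use assms in \<open>simp_all add: algebra_simps\<close>)
  moreover have "?conj ?g s = ?g s"
    by (rule shift_mult_divide_cancel) (use assms in \<open>simp_all add: add.commute\<close>)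
  ultimately have "raise_op R1 R2 (?conj ?g) s = raise_op R1 R2 ?g s"
    by (rule raise_op_cong)
  then show ?thesis
    by (simp add: aup_def adown_def R1_def R2_def raise_op_def lower_op_def mult_def)
qed

theorem theorem1:
  fixes q :: real and c1 c2 c3 mu \<alpha> s :: complex
    and st tt :: "complex poly"
    and A rt f :: "complex \<Rightarrow> complex" and U :: "complex set"
    and x sg sb :: "complex \<Rightarrow> complex"
  defines "x \<equiv> lat q c1 c2 c3"
    and "sg \<equiv> sig st tt x"
    and "sb \<equiv> sigbar c1 c2 mu st tt x"
  assumes "q > 0" and "q \<noteq> 1"
    and "c1 \<noteq> 0 \<and> c2 \<noteq> 0 \<longrightarrow> of_real q powr mu = c1 / c2"
    and "degree st \<le> 2" and "degree tt \<le> 1"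
    and "continuous_on U A" and "\<forall>z\<in>U. A z \<noteq> 0"
    and rt_sq: "\<forall>z. rt z * rt z = z"
    and branch1: "rt (sg s / bdiff x s) * rt (sb (s - 1) / fdiff x (s - 1))
                  = rt (sb (s - 1) * sg s) / bdiff x s"
    and branch2: "rt (sb s / fdiff x s) * rt (sg (s + 1) / bdiff x (s + 1))
                  = rt (sb s * sg (s + 1)) / fdiff x s"
    and "s + \<alpha> - 1 \<in> U" and "s + \<alpha> \<in> U"
    and "nx1 x (s + \<alpha> - 1) \<noteq> 0" and "nx1 x (s + \<alpha>) \<noteq> 0"
  shows "frakH rt x sg sb A f s = (aup rt x sg sb A \<alpha> \<circ> adown rt x sg sb A \<alpha>) f s"
proof -
  have rt_nonzero: "rt z \<noteq> 0" if "z \<noteq> 0" for z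
    using rt_sq that by (metis mult_zero_left)
  have "frakH rt x sg sb A f s = 1 / nx1 x s * (A s * Hop rt x sg sb (mult (\<lambda>t. 1 / A t) f) s)"
    by (simp add: frakH_def mult_def)
  also have "\<dots> = (aup rt x sg sb A \<alpha> \<circ> adown rt x sg sb A \<alpha>) f s"
    unfolding Hop_eq_raise_lower[OF rt_sq branch1 branch2]
    by (rule aup_comp_adown_apply[symmetric]) (use assms rt_nonzero in auto)
  finally show ?thesis .
qed

end
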